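(* Let $(p_{ij})_{i,j\in\{0,1\}}$ be a transition matrix with all $p_{ij}\in(0,1)$ and $p_{ij}\ne\tfrac12$ for some $(i,j)$, and for $i\in\{0,1\}$, $n\in\mathbb N_0$ let $I_n^i$ be binomially $B(n,p_{i0})$ distributed. Let $(a_i(n))_{n\in\mathbb N_0}$, $(\varepsilon_i(n))_{n\in\mathbb N_0}$, $i\in\{0,1\}$, be real sequences satisfying $$a_i(n)=p_{i0}\mathbb E[a_0(I_n^i)]+p_{i1}\mathbb E[a_1(n-I_n^i)]+\varepsilon_i(n),\qquad i\in\{0,1\},\ n\in\mathbb N.$$ If $\varepsilon_i(n)=c_i+O(n^{-\alpha})$ for constants $c_i\in\mathbb R$, some $\alpha>0$ and both $i$, then as $n\to\infty$ $$a_i(n)=\frac{\pi_0c_0+\pi_1c_1}{H}\log n+O(1),\qquad i\in\{0,1\}.$$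
   Context: $\pi_0=p_{10}/(p_{01}+p_{10})$, $\pi_1=p_{01}/(p_{01}+p_{10})$, $H_i=-\sum_{j}p_{ij}\log p_{ij}$, $H=\pi_0H_0+\pi_1H_1$. *)

theory Defs
  imports "HOL-Probability.Probability" "HOL-Library.Landau_Symbols"
begin

definition stat_pi :: "(nat \<Rightarrow> nat \<Rightarrow> real) \<Rightarrow> nat \<Rightarrow> real" where
  "stat_pi p i = (if i = 0 then p 1 0 / (p 0 1 + p 1 0) else p 0 1 / (p 0 1 + p 1 0))"

definition row_entropy :: "(nat \<Rightarrow> nat \<Rightarrow> real) \<Rightarrow> nat \<Rightarrow> real" where
  "row_entropy p i = - (\<Sum>j\<in>{0,1}. p i j * ln (p i j))"

definition entropy_rate :: "(nat \<Rightarrow> nat \<Rightarrow> real) \<Rightarrow> real" where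
  "entropy_rate p = stat_pi p 0 * row_entropy p 0 + stat_pi p 1 * row_entropy p 1"

end

theory Submission
  imports Defs "HOL-Real_Asymp.Real_Asymp"
begin

text \<open>Put \<open>K = (\<pi>\<^sub>0 c\<^sub>0 + \<pi>\<^sub>1 c\<^sub>1) / H\<close>. Since the binomial average of \<open>ln (k + 1)\<close> is
  \<open>ln ((n + 1) r) + O(1/n)\<close>, the functions \<open>F\<^sub>i(n) = K ln (n + 1) + \<beta>\<^sub>i\<close> solve the recurrence
  up to \<open>K H\<^sub>i + \<beta>\<^sub>i - p\<^sub>i\<^sub>0 \<beta>\<^sub>0 - p\<^sub>i\<^sub>1 \<beta>\<^sub>1 + O(1/n)\<close>, and \<open>K\<close>, \<open>\<beta>\<close> can be chosen so
  that this constant is \<open>c\<^sub>i\<close>. The remainder \<open>D = a - F\<close> then satisfies the recurrence with an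
  inhomogeneity \<open>O(n\<^sup>-\<^sup>\<gamma>)\<close>, \<open>\<gamma> = min \<alpha> 1\<close>. By strict convexity of \<open>x\<^sup>-\<^sup>\<gamma>\<close> the
  sequence \<open>(n + 1)\<^sup>-\<^sup>\<gamma>\<close> is a strict supersolution, absorbing this inhomogeneity, so a maximum
  principle for the recurrence shows that \<open>D\<close> is bounded.\<close>

section \<open>Binomial averages\<close>

definition binomial_weight :: "nat \<Rightarrow> real \<Rightarrow> nat \<Rightarrow> real" where
  "binomial_weight n r k = real (n choose k) * r ^ k * (1 - r) ^ (n - k)"

definition binomial_expectation :: "nat \<Rightarrow> real \<Rightarrow> (nat \<Rightarrow> real) \<Rightarrow> real" where
  "binomial_expectation n r f = (\<Sum>k\<le>n. binomial_weight n r k * f k)"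

lemma expectation_binomial_pmf_eq:
  "r \<in> {0..1} \<Longrightarrow> measure_pmf.expectation (binomial_pmf n r) f = binomial_expectation n r f"
  by (simp add: expectation_binomial_pmf' binomial_expectation_def binomial_weight_def)

lemma binomial_weight_nonneg: "0 \<le> r \<Longrightarrow> r \<le> 1 \<Longrightarrow> 0 \<le> binomial_weight n r k"
  by (simp add: binomial_weight_def)

lemma sum_binomial_weight: "(\<Sum>k\<le>n. binomial_weight n r k) = 1"
  using binomial_ring[of r "1 - r" n] by (simp add: binomial_weight_def mult_ac)

lemma binomial_weight_Suc_Suc:
  "real (Suc k) * binomial_weight (Suc n) r (Suc k) = real (Suc n) * r * binomial_weight n r k"
proof -
  have "real (Suc k) * real (Suc n choose Suc k) = real (Suc n) * real (n choose k)"
    using Suc_times_binomial_eq[of n k] by (metis of_nat_mult mult.commute)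
  then show ?thesis
    by (simp add: binomial_weight_def mult_ac)
qed

lemma binomial_expectation_add:
  "binomial_expectation n r (\<lambda>k. f k + g k) = binomial_expectation n r f + binomial_expectation n r g"
  by (simp add: binomial_expectation_def algebra_simps sum.distrib)

lemma binomial_expectation_cmult:
  "binomial_expectation n r (\<lambda>k. x * f k) = x * binomial_expectation n r f"
  by (simp add: binomial_expectation_def algebra_simps sum_distrib_left)

lemma binomial_expectation_const: "binomial_expectation n r (\<lambda>_. x) = x"
  using sum_binomial_weight[of n r]
  by (simp add: binomial_expectation_def flip: sum_distrib_right)

lemma binomial_expectation_diff:
  "binomial_expectation n r (\<lambda>k. f k - g k) = binomial_expectation n r f - binomial_expectation n r g"
  by (simp add: binomial_expectation_def algebra_simps sum_subtractf)

lemma binomial_expectation_mono: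
  "0 \<le> r \<Longrightarrow> r \<le> 1 \<Longrightarrow> (\<And>k. k \<le> n \<Longrightarrow> f k \<le> g k) \<Longrightarrow>
    binomial_expectation n r f \<le> binomial_expectation n r g"
  unfolding binomial_expectation_def
  by (intro sum_mono mult_left_mono) (auto simp: binomial_weight_nonneg)

lemma binomial_expectation_reflect:
  "binomial_expectation n r (\<lambda>k. f (n - k)) = binomial_expectation n (1 - r) f"
proof -
  have "binomial_expectation n r (\<lambda>k. f (n - k)) = (\<Sum>k=0..n. binomial_weight n r (n - k) * f (n - (n - k)))"
    by (subst sum.atLeastAtMost_rev) (simp add: binomial_expectation_def atMost_atLeast0)
  also have "\<dots> = binomial_expectation n (1 - r) f"
    by (auto intro!: sum.cong simp: binomial_expectation_def atMost_atLeast0 binomial_weight_def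
          binomial_symmetric[symmetric] mult_ac)
  finally show ?thesis .
qed

lemma binomial_expectation_mean: "binomial_expectation n r real = real n * r"
proof (cases n)
  case (Suc m)
  have "binomial_expectation n r real = (\<Sum>k\<le>m. real (Suc k) * binomial_weight (Suc m) r (Suc k))"
    unfolding binomial_expectation_def Suc
    by (subst sum.atMost_Suc_shift) (simp add: mult.commute del: of_nat_Suc)
  also have "\<dots> = real n * r"
    using sum_binomial_weight[of m r]
    by (simp add: binomial_weight_Suc_Suc Suc mult.assoc del: of_nat_Suc flip: sum_distrib_left)
  finally show ?thesis .
qed (simp add: binomial_expectation_def)

lemma binomial_expectation_affine:
  "binomial_expectation n r (\<lambda>k. x + y * real k) = x + y * (real n * r)"
  by (simp add: binomial_expectation_add binomial_expectation_cmult binomial_expectation_const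
      binomial_expectation_mean)

lemma binomial_expectation_inverse_Suc:
  assumes "0 < r" "r \<le> 1"
  shows "binomial_expectation n r (\<lambda>k. 1 / (real k + 1)) \<le> 1 / ((real n + 1) * r)"
proof -
  have "binomial_expectation n r (\<lambda>k. 1 / (real k + 1))
      = (\<Sum>k\<le>n. binomial_weight (Suc n) r (Suc k)) / ((real n + 1) * r)"
    unfolding binomial_expectation_def sum_divide_distrib
  proof (intro sum.cong refl)
    fix k
    have "binomial_weight (Suc n) r (Suc k) = (real n + 1) * r * binomial_weight n r k / (real k + 1)"
      using binomial_weight_Suc_Suc[of k n r] by (simp add: field_simps)
    then show "binomial_weight n r k * (1 / (real k + 1)) = binomial_weight (Suc n) r (Suc k) / ((real n + 1) * r)"
      using assms by simp
  qed
  also have "\<dots> \<le> 1 / ((real n + 1) * r)"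
  proof -
    have "(\<Sum>k\<le>n. binomial_weight (Suc n) r (Suc k)) \<le> 1"
      using sum_binomial_weight[of "Suc n" r] binomial_weight_nonneg[of r "Suc n" 0] assms
      by (subst (asm) sum.atMost_Suc_shift) simp
    then show ?thesis using assms by (intro divide_right_mono) auto
  qed
  finally show ?thesis .
qed

lemma binomial_expectation_top:
  assumes "0 \<le> r" "r \<le> 1" "\<And>k. k < n \<Longrightarrow> f k \<le> 0"
  shows "binomial_expectation n r f \<le> r ^ n * f n"
proof -
  have "(\<Sum>k<n. binomial_weight n r k * f k) \<le> 0"
    using assms by (intro sum_nonpos mult_nonneg_nonpos) (auto simp: binomial_weight_nonneg)
  then show ?thesis
    by (simp add: binomial_expectation_def binomial_weight_def flip: lessThan_Suc_atMost)
qed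

lemma convex_on_binomial_expectation:
  assumes "convex_on {0<..} f" "0 \<le> r" "r \<le> 1"
  shows "f (real n * r + 1) \<le> binomial_expectation n r (\<lambda>k. f (real k + 1))"
proof -
  have "real n * r + 1 = (\<Sum>k\<le>n. binomial_weight n r k *\<^sub>R (real k + 1))"
    using binomial_expectation_affine[of n r 1 1] by (simp add: binomial_expectation_def ac_simps)
  then show ?thesis
    using convex_on_sum[OF _ _ assms(1), of "{..n}" "binomial_weight n r" "\<lambda>k. real k + 1"]
      sum_binomial_weight[of n r] binomial_weight_nonneg[OF assms(2,3)]
    by (simp add: binomial_expectation_def)
qed

lemma convex_on_powr_neg: "0 \<le> \<gamma> \<Longrightarrow> convex_on {0<..} (\<lambda>x::real. x powr (-\<gamma>))"
  by (intro f''_ge0_imp_convex derivative_eq_intros | simp)+ (auto intro!: mult_nonpos_nonneg)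

lemma binomial_expectation_ln_Suc_upper:
  assumes "0 \<le> r" "r \<le> 1"
  shows "binomial_expectation n r (\<lambda>k. ln (real k + 1)) \<le> ln (real n * r + 1)"
proof -
  have "- ln (real n * r + 1) \<le> binomial_expectation n r (\<lambda>k. - ln (real k + 1))"
    using convex_on_binomial_expectation[of "\<lambda>x. - ln x"] ln_concave assms
    by (simp add: concave_on_def)
  then show ?thesis using binomial_expectation_cmult[of n r "-1"] by simp
qed

text \<open>The tangent line \<open>ln x \<ge> ln m + 1 - m / x\<close> reduces the lower bound to
  \<open>binomial_expectation_inverse_Suc\<close>.\<close>
lemma binomial_expectation_ln_Suc_lower:
  assumes "0 < r" "r \<le> 1"
  shows "ln (real n * r + 1) - (1 - r) / ((real n + 1) * r)
           \<le> binomial_expectation n r (\<lambda>k. ln (real k + 1))"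
proof -
  define m where "m = real n * r + 1"
  have m: "m > 0" using assms by (simp add: m_def add_nonneg_pos)
  have "ln m + 1 - m * binomial_expectation n r (\<lambda>k. 1 / (real k + 1))
      = binomial_expectation n r (\<lambda>k. (ln m + 1) - m * (1 / (real k + 1)))"
    unfolding binomial_expectation_diff binomial_expectation_cmult binomial_expectation_const ..
  also have "\<dots> \<le> binomial_expectation n r (\<lambda>k. ln (real k + 1))"
  proof (rule binomial_expectation_mono)
    fix k
    have "ln (m / (real k + 1)) \<le> m / (real k + 1) - 1"
      using m by (intro ln_le_minus_one) auto
    then show "(ln m + 1) - m * (1 / (real k + 1)) \<le> ln (real k + 1)"
      using m by (simp add: ln_div field_simps)
  qed (use assms in auto)
  finally have "ln m + 1 - m * binomial_expectation n r (\<lambda>k. 1 / (real k + 1))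
                  \<le> binomial_expectation n r (\<lambda>k. ln (real k + 1))" .
  moreover have "m * binomial_expectation n r (\<lambda>k. 1 / (real k + 1)) \<le> m / ((real n + 1) * r)"
    using mult_left_mono[OF binomial_expectation_inverse_Suc[OF assms, of n], of m] m
    by simp
  moreover have "(real n + 1) * r \<noteq> 0" using assms by simp
  then have "m / ((real n + 1) * r) = 1 + (1 - r) / ((real n + 1) * r)"
    by (simp add: m_def field_simps)
  ultimately show ?thesis unfolding m_def by linarith
qed

lemma binomial_expectation_ln_Suc:
  assumes "0 < r" "r < 1"
  shows "\<bar>binomial_expectation n r (\<lambda>k. ln (real k + 1)) - ln ((real n + 1) * r)\<bar>
           \<le> (1 - r) / ((real n + 1) * r)"
proof -
  define q where "q = (real n + 1) * r"
  have q: "q > 0" using assms by (simp add: q_def)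
  have mq: "real n * r + 1 = q + (1 - r)" by (simp add: q_def algebra_simps)
  have m: "real n * r + 1 > 0" using assms by (simp add: add_nonneg_pos)
  have "ln (real n * r + 1) - ln q = ln ((real n * r + 1) / q)"
    using q m by (simp add: ln_div)
  also have "\<dots> \<le> (real n * r + 1) / q - 1"
    using q m by (intro ln_le_minus_one) auto
  also have "\<dots> = (1 - r) / q" unfolding mq using q by (simp add: field_simps)
  finally have "ln (real n * r + 1) \<le> ln q + (1 - r) / q" by simp
  moreover have "ln q \<le> ln (real n * r + 1)" using q mq assms by simp
  ultimately show ?thesis
    using binomial_expectation_ln_Suc_upper[of r n] binomial_expectation_ln_Suc_lower[of r n] assms
    by (simp add: q_def abs_le_iff)
qed

lemma binomial_entropy_defect:
  assumes "0 < r" "r < 1"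
  shows "\<bar>ln (real n + 1) - r * binomial_expectation n r (\<lambda>k. ln (real k + 1))
            - (1 - r) * binomial_expectation n (1 - r) (\<lambda>k. ln (real k + 1))
            + (r * ln r + (1 - r) * ln (1 - r))\<bar> \<le> 1 / (real n + 1)"
proof -
  define s where "s = 1 - r"
  have s: "0 < s" "s < 1" "r + s = 1" using assms by (auto simp: s_def)
  define d where "d = (\<lambda>u. binomial_expectation n u (\<lambda>k. ln (real k + 1)) - ln ((real n + 1) * u))"
  have dr: "\<bar>r * d r\<bar> \<le> s / (real n + 1)"
    using mult_left_mono[OF binomial_expectation_ln_Suc[OF assms, of n], of r] assms
    by (simp add: d_def s_def abs_mult)
  have ds: "\<bar>s * d s\<bar> \<le> r / (real n + 1)"
    using mult_left_mono[OF binomial_expectation_ln_Suc[OF s(1,2), of n], of s] s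
    by (simp add: d_def s_def abs_mult)
  have "ln (real n + 1) - r * binomial_expectation n r (\<lambda>k. ln (real k + 1))
          - s * binomial_expectation n s (\<lambda>k. ln (real k + 1)) + (r * ln r + s * ln s)
        = - (r * d r) - s * d s"
  proof -
    have "ln ((real n + 1) * u) = ln (real n + 1) + ln u" if "u > 0" for u
      using that by (simp add: ln_mult)
    then show ?thesis
      using s assms by (simp add: d_def algebra_simps flip: distrib_right)
  qed
  moreover have "s / (real n + 1) + r / (real n + 1) = 1 / (real n + 1)"
    using s(3) by (simp add: add_divide_distrib[symmetric] add.commute)
  ultimately show ?thesis using dr ds unfolding s_def by linarith
qed

lemma powr_neg_split_gap:
  assumes r: "0 < r" "r < 1" and \<gamma>: "\<gamma> > 0"
  shows "\<exists>\<delta>>0. \<forall>\<^sub>F n in sequentially.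
           (real n + 1) powr -\<gamma> - r * (real n * r + 1) powr -\<gamma> - (1 - r) * (real n * (1 - r) + 1) powr -\<gamma>
           \<le> - \<delta> * real n powr -\<gamma>"
proof -
  define s where "s = 1 - r"
  have s: "0 < s" "s < 1" using r by (auto simp: s_def)
  define L where "L = 1 - r * r powr -\<gamma> - s * s powr -\<gamma>"
  have "r < r * r powr -\<gamma>" "s < s * s powr -\<gamma>"
    using powr_less_mono2_neg[of "-\<gamma>" r 1] powr_less_mono2_neg[of "-\<gamma>" s 1] r s \<gamma> by simp_all
  then have L: "L < 0" unfolding L_def s_def by simp
  \<comment> \<open>after scaling by \<open>n powr \<gamma>\<close> the gap tends to \<open>L\<close>\<close>
  define f where "f = (\<lambda>n::nat. (1 + 1 / real n) powr -\<gamma> - r * (r + 1 / real n) powr -\<gamma>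
                                  - s * (s + 1 / real n) powr -\<gamma>)"
  have "(f \<longlongrightarrow> (1 + 0) powr -\<gamma> - r * (r + 0) powr -\<gamma> - s * (s + 0) powr -\<gamma>) sequentially"
    unfolding f_def using r s by (intro tendsto_intros) auto
  then have "(f \<longlongrightarrow> L) sequentially" by (simp add: L_def)
  then have "\<forall>\<^sub>F n in sequentially. f n < L / 2" using L by (intro order_tendstoD(2)) auto
  then have "\<forall>\<^sub>F n in sequentially.
      (real n + 1) powr -\<gamma> - r * (real n * r + 1) powr -\<gamma> - s * (real n * s + 1) powr -\<gamma>
        \<le> - (- L / 2) * real n powr -\<gamma>"
    using eventually_ge_at_top[of 1]
  proof eventually_elim
    case (elim n)
    have scale: "(real n * u + 1) powr -\<gamma> = (u + 1 / real n) powr -\<gamma> * real n powr -\<gamma>" for u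
    proof -
      have "real n * u + 1 = (u + 1 / real n) * real n" using elim by (simp add: field_simps)
      then show ?thesis by (metis powr_mult)
    qed
    have "(real n * 1 + 1) powr -\<gamma> - r * (real n * r + 1) powr -\<gamma> - s * (real n * s + 1) powr -\<gamma>
        = f n * real n powr -\<gamma>"
      unfolding scale f_def by (simp add: algebra_simps)
    also have "\<dots> \<le> L / 2 * real n powr -\<gamma>"
      using elim by (intro mult_right_mono) auto
    finally show ?case by simp
  qed
  moreover have "- L / 2 > 0" using L by simp
  ultimately show ?thesis unfolding s_def by blast
qed

lemma powr_Suc_binomial_defect:
  assumes r: "0 < r" "r < 1" and \<gamma>: "\<gamma> > 0"
  shows "\<exists>\<delta>>0. \<forall>\<^sub>F n in sequentially.
           (real n + 1) powr -\<gamma> - r * binomial_expectation n r (\<lambda>k. (real k + 1) powr -\<gamma>)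
             - (1 - r) * binomial_expectation n (1 - r) (\<lambda>k. (real k + 1) powr -\<gamma>)
           \<le> - \<delta> * real n powr -\<gamma>"
proof -
  have jensen: "u * (real n * u + 1) powr -\<gamma> \<le> u * binomial_expectation n u (\<lambda>k. (real k + 1) powr -\<gamma>)"
    if "0 \<le> u" "u \<le> 1" for u n
    using convex_on_binomial_expectation[OF convex_on_powr_neg that] \<gamma> that by (simp add: mult_left_mono)
  from powr_neg_split_gap[OF r \<gamma>] obtain \<delta> where "\<delta> > 0" and gap: "\<forall>\<^sub>F n in sequentially.
      (real n + 1) powr -\<gamma> - r * (real n * r + 1) powr -\<gamma> - (1 - r) * (real n * (1 - r) + 1) powr -\<gamma>
        \<le> - \<delta> * real n powr -\<gamma>"
    by blast
  have "\<forall>\<^sub>F n in sequentially.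
      (real n + 1) powr -\<gamma> - r * binomial_expectation n r (\<lambda>k. (real k + 1) powr -\<gamma>)
        - (1 - r) * binomial_expectation n (1 - r) (\<lambda>k. (real k + 1) powr -\<gamma>)
        \<le> - \<delta> * real n powr -\<gamma>"
    using gap
  proof eventually_elim
    case (elim n)
    moreover have "r * (real n * r + 1) powr -\<gamma>
                     \<le> r * binomial_expectation n r (\<lambda>k. (real k + 1) powr -\<gamma>)"
      and "(1 - r) * (real n * (1 - r) + 1) powr -\<gamma>
             \<le> (1 - r) * binomial_expectation n (1 - r) (\<lambda>k. (real k + 1) powr -\<gamma>)"
      using jensen[of r n] jensen[of "1 - r" n] r by simp_all
    ultimately show ?case by linarith
  qed
  with \<open>\<delta> > 0\<close> show ?thesis by blast
qed

lemma bigo_real_powr_neg: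
  "\<gamma> \<le> s \<Longrightarrow> (\<lambda>n. real n powr -s) \<in> O(\<lambda>n. real n powr -\<gamma>)"
  by (subst powr_bigo_iff) (auto simp: filterlim_real_sequentially)

section \<open>The recurrence operator of a two-state chain\<close>

definition markov_split :: "(nat \<Rightarrow> nat \<Rightarrow> real) \<Rightarrow> (nat \<Rightarrow> nat \<Rightarrow> real) \<Rightarrow> nat \<Rightarrow> nat \<Rightarrow> real" where
  "markov_split p f i n = p i 0 * binomial_expectation n (p i 0) (f 0)
                        + p i 1 * binomial_expectation n (p i 0) (\<lambda>k. f 1 (n - k))"

lemma markov_split_linear:
  "markov_split p (\<lambda>i n. f i n + x * g i n) i n = markov_split p f i n + x * markov_split p g i n"
  unfolding markov_split_def binomial_expectation_add binomial_expectation_cmult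
  by (simp add: algebra_simps)

lemma markov_split_uminus: "markov_split p (\<lambda>i n. - f i n) i n = - markov_split p f i n"
  using markov_split_linear[of p "\<lambda>i n. 0" "-1" f i n]
  by (simp add: markov_split_def binomial_expectation_const)

locale two_state_chain =
  fixes p :: "nat \<Rightarrow> nat \<Rightarrow> real"
  assumes p_pos: "i \<in> {0,1} \<Longrightarrow> 0 < p i 0"
    and p_less_one: "i \<in> {0,1} \<Longrightarrow> p i 0 < 1"
    and p_row: "i \<in> {0,1} \<Longrightarrow> p i 1 = 1 - p i 0"
begin

lemma markov_split_diff_const:
  assumes "i \<in> {0,1}"
  shows "markov_split p (\<lambda>i n. f i n - x) i n = markov_split p f i n - x"
proof -
  have "p i 0 + p i 1 = 1" using p_row[OF assms] by simp
  then have "x * p i 0 + x * p i 1 = x" by (metis distrib_left mult_1_right)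
  then show ?thesis
    unfolding markov_split_def binomial_expectation_diff binomial_expectation_const
    by (simp add: algebra_simps)
qed

lemma markov_split_reflect:
  assumes "i \<in> {0,1}"
  shows "markov_split p f i n = p i 0 * binomial_expectation n (p i 0) (f 0)
           + (1 - p i 0) * binomial_expectation n (1 - p i 0) (f 1)"
  using p_row[OF assms] by (simp add: markov_split_def binomial_expectation_reflect)

text \<open>The binomial weight of the top index \<open>n\<close> is \<open>p i 0 ^ n\<close> resp. \<open>p i 1 ^ n\<close>,
  and \<open>p i 0 ^ Suc n + p i 1 ^ Suc n < 1\<close>, so a positive maximum at \<open>n\<close> could not be reproduced.\<close>
lemma markov_split_max_principle:
  assumes N: "N \<ge> 1"
    and sub: "\<And>i n. i \<in> {0,1} \<Longrightarrow> n \<ge> N \<Longrightarrow> Z i n \<le> markov_split p Z i n"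
    and init: "\<And>i m. i \<in> {0,1} \<Longrightarrow> m < N \<Longrightarrow> Z i m \<le> 0"
  shows "\<forall>i\<in>{0,1}. Z i n \<le> 0"
proof (induction n rule: less_induct)
  case (less n)
  show ?case
  proof (cases "n < N")
    case False
    define X where "X = max (Z 0 n) (Z 1 n)"
    have key: "Z i n \<le> (p i 0 ^ Suc n + (1 - p i 0) ^ Suc n) * X"
      and contract: "p i 0 ^ Suc n + (1 - p i 0) ^ Suc n < 1" if i: "i \<in> {0,1}" for i
    proof -
      have p0: "0 < p i 0" "p i 0 < 1" using p_pos[OF i] p_less_one[OF i] by auto
      have "Z i n \<le> markov_split p Z i n" using sub[OF i] False by simp
      also have "\<dots> \<le> p i 0 * (p i 0 ^ n * Z 0 n) + (1 - p i 0) * ((1 - p i 0) ^ n * Z 1 n)"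
        unfolding markov_split_reflect[OF i] using less.IH p0
        by (intro add_mono mult_left_mono binomial_expectation_top) auto
      also have "\<dots> \<le> p i 0 * (p i 0 ^ n * X) + (1 - p i 0) * ((1 - p i 0) ^ n * X)"
        using p0 unfolding X_def by (intro add_mono mult_left_mono) auto
      finally show "Z i n \<le> (p i 0 ^ Suc n + (1 - p i 0) ^ Suc n) * X"
        by (simp add: algebra_simps)
      have "p i 0 ^ Suc n < p i 0" "(1 - p i 0) ^ Suc n < 1 - p i 0"
        using p0 N False by (simp_all add: power_less_one_iff)
      then show "p i 0 ^ Suc n + (1 - p i 0) ^ Suc n < 1" by linarith
    qed
    have "X \<le> 0"
    proof (rule ccontr)
      assume "\<not> X \<le> 0"
      moreover obtain i where "i \<in> {0,1}" "X = Z i n" unfolding X_def by (metis insertCI max_def)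
      ultimately show False
        using key contract by (smt (verit) mult_less_cancel_right2)
    qed
    then show ?thesis unfolding X_def by auto
  qed (use init in auto)
qed

lemma bounded_above_by_supersolution:
  assumes \<delta>: "\<delta> > 0" and M: "M \<ge> 0"
    and sub: "\<forall>\<^sub>F n in sequentially. \<forall>i\<in>{0,1}. Y i n - markov_split p Y i n \<le> M * w n"
    and super: "\<forall>\<^sub>F n in sequentially. \<forall>i\<in>{0,1}. G i n - markov_split p G i n \<le> - \<delta> * w n"
    and G_nonneg: "\<And>i n. 0 \<le> G i n"
  shows "\<exists>S. \<forall>i\<in>{0,1}. \<forall>n. Y i n \<le> S"
proof -
  obtain N0 where N0: "\<And>n i. n \<ge> N0 \<Longrightarrow> i \<in> {0,1} \<Longrightarrow>
      Y i n - markov_split p Y i n \<le> M * w n \<and> G i n - markov_split p G i n \<le> - \<delta> * w n"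
    using eventually_conj[OF sub super] by (auto simp: eventually_at_top_linorder)
  define N where "N = max 1 N0"
  define B where "B = (\<lambda>i n. Y i n + (M / \<delta>) * G i n)"
  define S where "S = (\<Sum>m<N. \<bar>B 0 m\<bar> + \<bar>B 1 m\<bar>)"
  have "\<forall>i\<in>{0,1}. B i n - S \<le> 0" for n
  proof (rule markov_split_max_principle)
    fix i n :: nat assume i: "i \<in> {0,1}" and n: "n \<ge> N"
    then have "Y i n - markov_split p Y i n \<le> M * w n"
      and "G i n - markov_split p G i n \<le> - \<delta> * w n"
      using N0[of n i] by (auto simp: N_def)
    moreover from this(2) have "(M / \<delta>) * (G i n - markov_split p G i n) \<le> (M / \<delta>) * (- \<delta> * w n)"
      using M \<delta> by (intro mult_left_mono) auto
    ultimately have "B i n \<le> markov_split p B i n"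
      using \<delta> unfolding B_def markov_split_linear by (simp add: algebra_simps)
    then show "B i n - S \<le> markov_split p (\<lambda>i n. B i n - S) i n"
      by (simp add: markov_split_diff_const[OF i])
  next
    fix i m :: nat assume i: "i \<in> {0,1}" and m: "m < N"
    have "\<bar>B i m\<bar> \<le> \<bar>B 0 m\<bar> + \<bar>B 1 m\<bar>" using i by auto
    also have "\<dots> \<le> S" unfolding S_def using m
      by (intro member_le_sum[where f = "\<lambda>m. \<bar>B 0 m\<bar> + \<bar>B 1 m\<bar>"]) auto
    finally show "B i m - S \<le> 0" by simp
  qed (simp add: N_def)
  moreover have "Y i n \<le> B i n" for i n
    using M \<delta> G_nonneg[of i n] by (simp add: B_def)
  ultimately show ?thesis by (meson order_trans diff_le_0_iff_le)
qed

lemma markov_split_powr_defect: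
  assumes \<gamma>: "\<gamma> > 0"
  shows "\<exists>\<delta>>0. \<forall>\<^sub>F n in sequentially. \<forall>i\<in>{0,1}.
           (real n + 1) powr -\<gamma> - markov_split p (\<lambda>_ n. (real n + 1) powr -\<gamma>) i n
           \<le> - \<delta> * real n powr -\<gamma>"
proof -
  let ?defect = "\<lambda>i n. (real n + 1) powr -\<gamma> - markov_split p (\<lambda>_ n. (real n + 1) powr -\<gamma>) i n"
  have "\<exists>\<delta>>0. \<forall>\<^sub>F n in sequentially. ?defect i n \<le> - \<delta> * real n powr -\<gamma>" if i: "i \<in> {0,1}" for i
    using powr_Suc_binomial_defect[OF p_pos[OF i] p_less_one[OF i] \<gamma>]
    by (simp add: markov_split_reflect[OF i] diff_diff_eq)
  then obtain \<delta>0 \<delta>1 where \<delta>: "\<delta>0 > 0" "\<delta>1 > 0"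
    and ev0: "\<forall>\<^sub>F n in sequentially. ?defect 0 n \<le> - \<delta>0 * real n powr -\<gamma>"
    and ev1: "\<forall>\<^sub>F n in sequentially. ?defect 1 n \<le> - \<delta>1 * real n powr -\<gamma>"
    by blast
  have min: "- \<delta>' * real n powr -\<gamma> \<le> - min \<delta>0 \<delta>1 * real n powr -\<gamma>" if "\<delta>' \<in> {\<delta>0, \<delta>1}" for \<delta>' n
    using that by (intro mult_right_mono) auto
  have "\<forall>\<^sub>F n in sequentially. \<forall>i\<in>{0,1}. ?defect i n \<le> - min \<delta>0 \<delta>1 * real n powr -\<gamma>"
    using ev0 ev1
  proof eventually_elim
    case (elim n)
    then show ?case using min[of \<delta>0 n] min[of \<delta>1 n] by auto
  qed
  then show ?thesis using \<delta> by (intro exI[of _ "min \<delta>0 \<delta>1"]) auto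
qed
lemma bounded_of_markov_split_defect:
  assumes \<gamma>: "\<gamma> > 0"
    and defect: "\<And>i. i \<in> {0,1} \<Longrightarrow> (\<lambda>n. D i n - markov_split p D i n) \<in> O(\<lambda>n. real n powr -\<gamma>)"
  shows "\<exists>S. \<forall>i\<in>{0,1}. \<forall>n. \<bar>D i n\<bar> \<le> S"
proof -
  have "(\<lambda>n. \<bar>D 0 n - markov_split p D 0 n\<bar> + \<bar>D 1 n - markov_split p D 1 n\<bar>)
          \<in> O(\<lambda>n. real n powr -\<gamma>)"
    using defect[of 0] defect[of 1] by (intro sum_in_bigo) simp_all
  then obtain M where M: "M > 0" and "\<forall>\<^sub>F n in sequentially.
      \<bar>D 0 n - markov_split p D 0 n\<bar> + \<bar>D 1 n - markov_split p D 1 n\<bar> \<le> M * real n powr -\<gamma>"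
    by (elim landau_o.bigE) simp
  then have defect_bound: "\<forall>\<^sub>F n in sequentially. \<forall>i\<in>{0,1}.
      \<bar>D i n - markov_split p D i n\<bar> \<le> M * real n powr -\<gamma>"
    by (elim eventually_mono) auto
  obtain \<delta> where \<delta>: "\<delta> > 0" and super: "\<forall>\<^sub>F n in sequentially. \<forall>i\<in>{0,1}.
      (real n + 1) powr -\<gamma> - markov_split p (\<lambda>_ n. (real n + 1) powr -\<gamma>) i n
        \<le> - \<delta> * real n powr -\<gamma>"
    using markov_split_powr_defect[OF \<gamma>] by blast
  note bounded_above = bounded_above_by_supersolution[OF \<delta> less_imp_le[OF M] _ super powr_ge_zero]
  have "\<exists>S. \<forall>i\<in>{0,1}. \<forall>n. D i n \<le> S"
    by (rule bounded_above) (use defect_bound in \<open>auto elim!: eventually_mono dest: abs_le_D1\<close>)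
  moreover have "\<exists>S. \<forall>i\<in>{0,1}. \<forall>n. - D i n \<le> S"
    by (rule bounded_above)
      (use defect_bound in \<open>auto elim!: eventually_mono dest: abs_le_D2 simp: markov_split_uminus\<close>)
  ultimately obtain S1 S2 where "\<forall>i\<in>{0,1}. \<forall>n. D i n \<le> S1" "\<forall>i\<in>{0,1}. \<forall>n. - D i n \<le> S2"
    by blast
  then show ?thesis by (intro exI[of _ "max S1 S2"]) (auto simp: abs_le_iff max.coboundedI1 max.coboundedI2)
qed

lemma row_entropy_pos:
  assumes i: "i \<in> {0,1}"
  shows "row_entropy p i > 0"
proof -
  have "p i j * ln (p i j) < 0" if "j \<in> {0,1}" for j
    using that p_pos[OF i] p_less_one[OF i] p_row[OF i] by (auto intro!: mult_pos_neg)
  from this[of 0] this[of 1] show ?thesis by (simp add: row_entropy_def)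
qed

lemma markov_split_log_defect:
  assumes i: "i \<in> {0,1}"
  shows "\<bar>(K * ln (real n + 1) + \<beta> i) - markov_split p (\<lambda>i n. K * ln (real n + 1) + \<beta> i) i n
            - (K * row_entropy p i + \<beta> i - p i 0 * \<beta> 0 - p i 1 * \<beta> 1)\<bar> \<le> \<bar>K\<bar> / (real n + 1)"
proof -
  define r where "r = p i 0"
  have r: "0 < r" "r < 1" and p1: "p i 1 = 1 - r" using p_pos[OF i] p_less_one[OF i] p_row[OF i] by (auto simp: r_def)
  let ?E = "\<lambda>u. binomial_expectation n u (\<lambda>k. ln (real k + 1))"
  have "row_entropy p i = - (p i 0 * ln (p i 0) + p i 1 * ln (p i 1))"
    by (simp add: row_entropy_def)
  then have H: "row_entropy p i = - (r * ln r + (1 - r) * ln (1 - r))"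
    by (simp only: p1 r_def)
  have "(K * ln (real n + 1) + \<beta> i) - markov_split p (\<lambda>i n. K * ln (real n + 1) + \<beta> i) i n
          - (K * row_entropy p i + \<beta> i - p i 0 * \<beta> 0 - p i 1 * \<beta> 1)
        = K * (ln (real n + 1) - r * ?E r - (1 - r) * ?E (1 - r) + (r * ln r + (1 - r) * ln (1 - r)))"
    unfolding markov_split_reflect[OF i] binomial_expectation_add binomial_expectation_cmult
      binomial_expectation_const H p1
    by (simp add: r_def algebra_simps)
  also have "\<bar>\<dots>\<bar> \<le> \<bar>K\<bar> * (1 / (real n + 1))"
    unfolding abs_mult by (intro mult_left_mono binomial_entropy_defect r) auto
  finally show ?thesis by simp
qed

lemma markov_split_log_defect_bigo:
  assumes i: "i \<in> {0,1}"
  shows "(\<lambda>n. (K * ln (real n + 1) + \<beta> i) - markov_split p (\<lambda>i n. K * ln (real n + 1) + \<beta> i) i n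
            - (K * row_entropy p i + \<beta> i - p i 0 * \<beta> 0 - p i 1 * \<beta> 1)) \<in> O(\<lambda>n. real n powr -1)"
proof (rule landau_o.big_trans)
  show "(\<lambda>n::nat. \<bar>K\<bar> / (real n + 1)) \<in> O(\<lambda>n. real n powr -1)" by real_asymp
qed (use markov_split_log_defect[OF i] in \<open>auto intro!: bigoI[of _ 1]\<close>)

lemma log_ansatz_remainder_defect:
  assumes i: "i \<in> {0,1}" and \<gamma>: "\<gamma> \<le> 1"
    and rec: "\<forall>\<^sub>F n in sequentially. a i n = markov_split p a i n + eps i n"
    and eps: "(\<lambda>n. eps i n - c i) \<in> O(\<lambda>n. real n powr -\<gamma>)"
    and \<beta>: "K * row_entropy p i + \<beta> i - p i 0 * \<beta> 0 - p i 1 * \<beta> 1 = c i"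
  defines "D \<equiv> \<lambda>i n. a i n - (K * ln (real n + 1) + \<beta> i)"
  shows "(\<lambda>n. D i n - markov_split p D i n) \<in> O(\<lambda>n. real n powr -\<gamma>)"
proof -
  define F where "F = (\<lambda>i n. K * ln (real n + 1) + \<beta> i)"
  have "\<forall>\<^sub>F n in sequentially.
          (eps i n - c i) - (F i n - markov_split p F i n - c i) = D i n - markov_split p D i n"
    using rec
  proof eventually_elim
    case (elim n)
    have "markov_split p D i n = markov_split p a i n + (-1) * markov_split p F i n"
      unfolding D_def F_def using markov_split_linear[of p a "-1"] by simp
    with elim show ?case by (simp add: D_def F_def)
  qed
  moreover have "(\<lambda>n. F i n - markov_split p F i n - c i) \<in> O(\<lambda>n. real n powr -\<gamma>)"
    using landau_o.big_trans[OF markov_split_log_defect_bigo[OF i, of K \<beta>] bigo_real_powr_neg[OF \<gamma>]]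
    unfolding F_def \<beta>[symmetric] .
  ultimately show ?thesis
    using eps by (metis (mono_tags) landau_o.big.in_cong sum_in_bigo(2))
qed

text \<open>The system \<open>(I - P) \<beta> = c - K H\<close> is solvable iff its right-hand side is orthogonal to the
  stationary distribution \<open>\<pi>\<close>; this is exactly what determines \<open>K\<close>.\<close>
lemma markov_split_offsets:
  "\<exists>\<beta>. \<forall>i\<in>{0,1}. (stat_pi p 0 * c 0 + stat_pi p 1 * c 1) / entropy_rate p * row_entropy p i
                     + \<beta> i - p i 0 * \<beta> 0 - p i 1 * \<beta> 1 = c i"
proof -
  define K where "K = (stat_pi p 0 * c 0 + stat_pi p 1 * c 1) / entropy_rate p"
  define H0 H1 where "H0 = row_entropy p 0" and "H1 = row_entropy p 1"
  have q: "p 0 1 > 0" "p 1 0 > 0" using p_less_one[of 0] p_row[of 0] p_pos[of 1] by auto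
  have den: "p 1 0 * H0 + p 0 1 * H1 > 0"
    using q row_entropy_pos[of 0] row_entropy_pos[of 1] by (simp add: H0_def H1_def add_pos_pos)
  have "entropy_rate p = (p 1 0 * H0 + p 0 1 * H1) / (p 0 1 + p 1 0)"
    and "stat_pi p 0 * c 0 + stat_pi p 1 * c 1 = (p 1 0 * c 0 + p 0 1 * c 1) / (p 0 1 + p 1 0)"
    by (simp_all add: entropy_rate_def stat_pi_def H0_def H1_def add_divide_distrib)
  then have K: "K * (p 1 0 * H0 + p 0 1 * H1) = p 1 0 * c 0 + p 0 1 * c 1"
    using q den by (simp add: K_def)
  define b0 where "b0 = (c 0 - K * H0) / p 0 1"
  define \<beta> where "\<beta> = (\<lambda>i::nat. if i = 0 then b0 else 0)"
  have "K * H0 + \<beta> 0 - p 0 0 * \<beta> 0 - p 0 1 * \<beta> 1 = K * H0 + (1 - p 0 0) * \<beta> 0"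
    by (simp add: \<beta>_def left_diff_distrib)
  also have "\<dots> = c 0" using p_row[of 0] q by (simp add: \<beta>_def b0_def)
  finally have "K * H0 + \<beta> 0 - p 0 0 * \<beta> 0 - p 0 1 * \<beta> 1 = c 0" .
  moreover have "K * H1 + \<beta> 1 - p 1 0 * \<beta> 0 - p 1 1 * \<beta> 1 = c 1"
    using q K by (simp add: \<beta>_def b0_def field_simps)
  ultimately show ?thesis unfolding K_def H0_def H1_def by auto
qed

end

theorem lemma4p4:
  fixes p :: "nat \<Rightarrow> nat \<Rightarrow> real"
    and a eps :: "nat \<Rightarrow> nat \<Rightarrow> real"
    and c :: "nat \<Rightarrow> real"
    and \<alpha> :: real
  assumes p_range: "\<And>i j. i \<in> {0,1} \<Longrightarrow> j \<in> {0,1} \<Longrightarrow> 0 < p i j \<and> p i j < 1"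
    and p_stoch: "\<And>i. i \<in> {0,1} \<Longrightarrow> p i 0 + p i 1 = 1"
    and p_not_half: "\<exists>i\<in>{0,1}. \<exists>j\<in>{0,1}. p i j \<noteq> 1/2"
    and rec: "\<And>i n. i \<in> {0,1} \<Longrightarrow> n \<ge> 1 \<Longrightarrow>
       a i n = p i 0 * measure_pmf.expectation (binomial_pmf n (p i 0)) (\<lambda>k. a 0 k)
             + p i 1 * measure_pmf.expectation (binomial_pmf n (p i 0)) (\<lambda>k. a 1 (n - k))
             + eps i n"
    and alpha_pos: "\<alpha> > 0"
    and eps_asymp: "\<And>i. i \<in> {0,1} \<Longrightarrow>
       (\<lambda>n. eps i n - c i) \<in> O(\<lambda>n. real n powr (-\<alpha>))"
  shows "\<forall>i\<in>{0,1}. (\<lambda>n. a i n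
            - (stat_pi p 0 * c 0 + stat_pi p 1 * c 1) / entropy_rate p * ln (real n))
          \<in> O(\<lambda>_. 1)"
proof -
  have "0 < p i 0" "p i 0 < 1" "p i 1 = 1 - p i 0" if "i \<in> {0,1}" for i
    using p_range[OF that, of 0] p_stoch[OF that] by auto
  then interpret two_state_chain p by (simp add: two_state_chain_def)
  define K where "K = (stat_pi p 0 * c 0 + stat_pi p 1 * c 1) / entropy_rate p"
  obtain \<beta> where \<beta>: "\<forall>i\<in>{0,1}. K * row_entropy p i + \<beta> i - p i 0 * \<beta> 0 - p i 1 * \<beta> 1 = c i"
    using markov_split_offsets[of c] unfolding K_def by blast
  define D where "D = (\<lambda>i n. a i n - (K * ln (real n + 1) + \<beta> i))"
  define \<gamma> where "\<gamma> = min \<alpha> 1"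
  have \<gamma>: "\<gamma> > 0" "\<gamma> \<le> \<alpha>" "\<gamma> \<le> 1" using alpha_pos by (simp_all add: \<gamma>_def)
  have "(\<lambda>n. D i n - markov_split p D i n) \<in> O(\<lambda>n. real n powr -\<gamma>)" if i: "i \<in> {0,1}" for i
    unfolding D_def
  proof (rule log_ansatz_remainder_defect[OF i \<gamma>(3)])
    show "\<forall>\<^sub>F n in sequentially. a i n = markov_split p a i n + eps i n"
      using eventually_ge_at_top[of 1] by eventually_elim
        (use rec[OF i] p_pos[OF i] p_less_one[OF i] in \<open>simp add: markov_split_def expectation_binomial_pmf_eq\<close>)
  qed (use eps_asymp[OF i] bigo_real_powr_neg[OF \<gamma>(2)] \<beta> i in \<open>auto intro: landau_o.big_trans\<close>)
  then obtain S where S: "\<forall>i\<in>{0,1}. \<forall>n. \<bar>D i n\<bar> \<le> S"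
    using bounded_of_markov_split_defect[OF \<gamma>(1)] by blast
  show ?thesis
    unfolding K_def[symmetric]
  proof
    fix i :: nat assume i: "i \<in> {0,1}"
    have "(\<lambda>n. D i n) \<in> O(\<lambda>_. 1)" using S i by (intro bigoI[of _ S]) auto
    moreover have "(\<lambda>n. K * (ln (real n + 1) - ln (real n))) \<in> O(\<lambda>_. 1)" by real_asymp
    ultimately have "(\<lambda>n. D i n + K * (ln (real n + 1) - ln (real n)) + \<beta> i) \<in> O(\<lambda>_. 1)"
      by (intro sum_in_bigo(1) bigo_const)
    then show "(\<lambda>n. a i n - K * ln (real n)) \<in> O(\<lambda>_. 1)"
      by (simp add: D_def algebra_simps)
  qed
qed

end
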